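(* Let $n\ge1$, $m>1$, $a\in\mathbb{R}^n$, $d\in\mathbb{R}^m$ with $\|d\|\ge\|a\|$, and $S_{\le0}=\{(x,y)\in\mathbb{R}^{n+m}:\|x\|\le\|y\|,\ a^\mathsf{T} x+d^\mathsf{T} y\le0\}$. Let $(\bar x,\bar y)\notin S_{\le0}$ satisfy $a^\mathsf{T}\bar x+d^\mathsf{T}\bar y\le0$ and let $\lambda=\bar x/\|\bar x\|$. Define $G(\lambda)=\{\beta\in\mathbb{R}^m:\|\beta\|=1,\ a^\mathsf{T}\lambda+d^\mathsf{T}\beta\le0\}$ and $C_{G(\lambda)}=\{(x,y):-\lambda^\mathsf{T} x+\beta^\mathsf{T} y\le0\ \forall\beta\in G(\lambda)\}$. Then $C_{G(\lambda)}$ is maximal $S_{\le0}$-free and contains $(\bar x,\bar y)$ in its interior.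
   Context: $\|\cdot\|$ is the Euclidean norm. A convex set $C$ is $S$-free if $\operatorname{int}(C)\cap S=\emptyset$, and maximal $S$-free if it is $S$-free and no $S$-free convex set strictly contains it. (Note $(\bar x,\bar y)\notin S_{\le0}$ together with the linear inequality means $\|\bar x\|>\|\bar y\|$.) *)

theory Defs
  imports "HOL-Analysis.Analysis"
begin

text \<open>R^{n+m} is rendered as the product type real^'n \<times> real^'m (Euclidean norm on pairs).\<close>

definition S_free :: "('a::real_normed_vector) set \<Rightarrow> 'a set \<Rightarrow> bool" where
  "S_free S C \<longleftrightarrow> convex C \<and> interior C \<inter> S = {}"

definition maximal_S_free :: "('a::real_normed_vector) set \<Rightarrow> 'a set \<Rightarrow> bool" where
  "maximal_S_free S C \<longleftrightarrow> S_free S C \<and> (\<forall>C'. S_free S C' \<and> C \<subseteq> C' \<longrightarrow> C' = C)"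

definition S_le0 :: "real^'n \<Rightarrow> real^'m \<Rightarrow> ((real^'n) \<times> (real^'m)) set" where
  "S_le0 a d = {(x, y). norm x \<le> norm y \<and> a \<bullet> x + d \<bullet> y \<le> 0}"

definition G_set :: "real^'n \<Rightarrow> real^'m \<Rightarrow> real^'n \<Rightarrow> (real^'m) set" where
  "G_set a d lam = {\<beta>. norm \<beta> = 1 \<and> a \<bullet> lam + d \<bullet> \<beta> \<le> 0}"

definition C_G :: "real^'n \<Rightarrow> (real^'m) set \<Rightarrow> ((real^'n) \<times> (real^'m)) set" where
  "C_G lam G = {(x, y). \<forall>\<beta>\<in>G. - (lam \<bullet> x) + \<beta> \<bullet> y \<le> 0}"

end

theory Submission
  imports Defs
begin

text \<open>
  \<open>C_G \<lambda> G\<close> is an intersection of half-spaces, hence a convex cone, and it contains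
  \<open>(x\<^sub>b, y\<^sub>b)\<close> in its interior because \<open>\<beta> \<bullet> y\<^sub>b \<le> \<parallel>y\<^sub>b\<parallel> < \<parallel>x\<^sub>b\<parallel> = \<lambda> \<bullet> x\<^sub>b\<close> uniformly in \<open>\<beta>\<close>.

  It is \<open>S\<close>-free because every \<open>(x, y) \<in> S\<close> admits some \<open>\<beta> \<in> G(\<lambda>)\<close> with \<open>\<lambda> \<bullet> x \<le> \<beta> \<bullet> y\<close>,
  so that \<open>(x, y)\<close> lies on a supporting hyperplane of the cone.  With \<open>c = -a \<bullet> \<lambda>\<close> and
  \<open>t = \<lambda> \<bullet> x\<close>, splitting \<open>a\<close> and \<open>x\<close> along \<open>\<lambda>\<close> gives
  \<open>d \<bullet> y \<le> c t + \<surd>(\<parallel>d\<parallel>\<^sup>2 - c\<^sup>2) \<surd>(\<parallel>y\<parallel>\<^sup>2 - t\<^sup>2)\<close>, i.e. the angle between \<open>d\<close> and \<open>y\<close> is at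
  least \<open>arccos (c / \<parallel>d\<parallel>) - arccos (t / \<parallel>y\<parallel>)\<close>.  Hence turning \<open>y\<close> away from \<open>d\<close> in a plane
  containing both (here \<open>m \<ge> 2\<close> is used) until \<open>d \<bullet> \<beta> = c\<close> keeps \<open>\<beta> \<bullet> y \<ge> t\<close>.

  For maximality, every \<open>(\<lambda>, \<beta>)\<close> with \<open>\<beta> \<in> G(\<lambda>)\<close> lies in \<open>S\<close>.  If a convex \<open>C' \<supset> C\<close>
  contains a point \<open>z\<close> violating the constraint of \<open>\<beta>\<^sub>0\<close>, then \<open>(\<lambda>, \<beta>\<^sub>0) - \<theta> z\<close> is interior
  to \<open>C\<close> for small \<open>\<theta> > 0\<close>; as \<open>C\<close> is a cone, \<open>(\<lambda>, \<beta>\<^sub>0)\<close> is then a convex combination of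
  \<open>z\<close> and an interior point of \<open>C'\<close>, hence interior to \<open>C'\<close>.
\<close>

text \<open>With \<open>\<gamma> = arccos c\<close>, \<open>\<rho> = arccos p\<close>, \<open>\<tau> = arccos t\<close>: from \<open>\<rho> \<ge> \<gamma> - \<tau>\<close> and \<open>\<rho> < \<gamma>\<close>
  follows \<open>\<tau> \<ge> \<gamma> - \<rho>\<close>.\<close>

lemma arccos_triangle_bound:
  fixes c p t :: real
  assumes c: "\<bar>c\<bar> \<le> 1" and p: "\<bar>p\<bar> \<le> 1" and t: "\<bar>t\<bar> \<le> 1" and "c < p"
    and "p \<le> c * t + sqrt (1 - c\<^sup>2) * sqrt (1 - t\<^sup>2)"
  shows "t \<le> c * p + sqrt (1 - c\<^sup>2) * sqrt (1 - p\<^sup>2)"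
proof -
  define \<gamma> \<rho> \<tau> where "\<gamma> = arccos c" and "\<rho> = arccos p" and "\<tau> = arccos t"
  have ranges: "0 \<le> \<gamma>" "\<gamma> \<le> pi" "0 \<le> \<rho>" "\<rho> \<le> pi" "0 \<le> \<tau>" "\<tau> \<le> pi"
    using c p t by (auto simp: \<gamma>_def \<rho>_def \<tau>_def intro!: arccos_lbound arccos_ubound)
  have cos_diff_arccos: "cos (arccos u - arccos v) = u * v + sqrt (1 - u\<^sup>2) * sqrt (1 - v\<^sup>2)"
    if "\<bar>u\<bar> \<le> 1" "\<bar>v\<bar> \<le> 1" for u v :: real
    using that by (simp add: cos_diff sin_arccos_abs)
  have "\<rho> < \<gamma>"
    using c p \<open>c < p\<close> by (simp add: \<gamma>_def \<rho>_def arccos_less_arccos)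
  have "\<gamma> - \<rho> \<le> \<tau>"
  proof (cases "\<gamma> \<le> \<tau>")
    case False
    have "cos \<rho> \<le> cos (\<gamma> - \<tau>)"
      using assms c t p by (simp add: \<gamma>_def \<rho>_def \<tau>_def cos_diff_arccos)
    then have "\<gamma> - \<tau> \<le> \<rho>"
      using False ranges by (subst (asm) cos_mono_le_eq) auto
    then show ?thesis by simp
  qed (use ranges in auto)
  then have "cos \<tau> \<le> cos (\<gamma> - \<rho>)"
    using ranges \<open>\<rho> < \<gamma>\<close> by (subst cos_mono_le_eq) auto
  then show ?thesis
    using c p t by (simp add: \<gamma>_def \<rho>_def \<tau>_def cos_diff_arccos)
qed

lemma norm_minus_projection_squared:
  fixes lam v :: "'a::real_inner"
  assumes "norm lam = 1"
  shows "(norm (v - (lam \<bullet> v) *\<^sub>R lam))\<^sup>2 = (norm v)\<^sup>2 - (lam \<bullet> v)\<^sup>2"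
proof -
  have "lam \<bullet> lam = 1"
    using assms by (simp add: dot_square_norm)
  then show ?thesis
    by (simp only: power2_norm_eq_inner) (simp add: inner_diff_left inner_diff_right inner_commute power2_eq_square)
qed

lemma inner_ge_components_bound:
  fixes lam a x :: "'a::real_inner"
  assumes "norm lam = 1"
  shows "(lam \<bullet> a) * (lam \<bullet> x)
           - sqrt ((norm a)\<^sup>2 - (lam \<bullet> a)\<^sup>2) * sqrt ((norm x)\<^sup>2 - (lam \<bullet> x)\<^sup>2) \<le> a \<bullet> x"
proof -
  define a' x' where "a' = a - (lam \<bullet> a) *\<^sub>R lam" and "x' = x - (lam \<bullet> x) *\<^sub>R lam"
  have "a \<bullet> x = (lam \<bullet> a) * (lam \<bullet> x) + a' \<bullet> x'"
    using assms by (simp add: a'_def x'_def inner_diff_left inner_diff_right inner_commute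
        norm_eq_sqrt_inner algebra_simps)
  moreover have "- (a' \<bullet> x') \<le> norm a' * norm x'"
    using Cauchy_Schwarz_ineq2[of a' x'] by linarith
  moreover have "norm a' = sqrt ((norm a)\<^sup>2 - (lam \<bullet> a)\<^sup>2)" and "norm x' = sqrt ((norm x)\<^sup>2 - (lam \<bullet> x)\<^sup>2)"
    using norm_minus_projection_squared[OF assms] unfolding a'_def x'_def
    by (metis norm_ge_zero real_sqrt_unique)+
  then have "norm a' * norm x'
      = sqrt ((norm a)\<^sup>2 - (lam \<bullet> a)\<^sup>2) * sqrt ((norm x)\<^sup>2 - (lam \<bullet> x)\<^sup>2)"
    by (simp only:)
  ultimately show ?thesis by linarith
qed

lemma unit_vector_orthogonal_decomposition:
  fixes d y :: "'a::euclidean_space"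
  assumes "2 \<le> DIM('a)" and "norm d = 1" and "norm y = 1"
  obtains f where "norm f = 1" and "d \<bullet> f = 0" and "y = (d \<bullet> y) *\<^sub>R d + sqrt (1 - (d \<bullet> y)\<^sup>2) *\<^sub>R f"
proof -
  define r where "r = y - (d \<bullet> y) *\<^sub>R d"
  have norm_r: "norm r = sqrt (1 - (d \<bullet> y)\<^sup>2)"
    using norm_minus_projection_squared[OF assms(2), of y] assms(3)
    by (metis r_def norm_ge_zero power_one real_sqrt_unique)
  have "d \<bullet> r = 0"
    using assms(2) by (simp add: r_def inner_diff_right dot_square_norm)
  show thesis
  proof (cases "r = 0")
    case False
    define f where "f = r /\<^sub>R norm r"
    have "y = (d \<bullet> y) *\<^sub>R d + norm r *\<^sub>R f"
      using False by (simp add: f_def r_def)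
    show thesis
    proof (rule that[of f])
      show "norm f = 1" and "d \<bullet> f = 0"
        using False \<open>d \<bullet> r = 0\<close> by (simp_all add: f_def)
      show "y = (d \<bullet> y) *\<^sub>R d + sqrt (1 - (d \<bullet> y)\<^sup>2) *\<^sub>R f"
        using \<open>y = (d \<bullet> y) *\<^sub>R d + norm r *\<^sub>R f\<close> by (simp only: norm_r)
    qed
  next
    case True
    obtain g where "g \<noteq> 0" "orthogonal d g"
      using orthogonal_to_vector_exists assms(1) by blast
    show thesis
      by (rule that[of "g /\<^sub>R norm g"])
        (use \<open>g \<noteq> 0\<close> \<open>orthogonal d g\<close> True norm_r in \<open>auto simp: orthogonal_def r_def\<close>)
  qed
qed

text \<open>\<open>\<beta>\<close> is \<open>y\<close> turned away from \<open>d\<close>, in a plane containing both, until its angle to \<open>d\<close>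
  is \<open>arccos c\<close>.\<close>

lemma exists_unit_vector_inner_bounds_normalized:
  fixes d y :: "'a::euclidean_space" and c t :: real
  assumes "2 \<le> DIM('a)" and "norm d = 1" and "norm y = 1" and "\<bar>c\<bar> \<le> 1" and "\<bar>t\<bar> \<le> 1"
    and "c < d \<bullet> y" and "d \<bullet> y \<le> c * t + sqrt (1 - c\<^sup>2) * sqrt (1 - t\<^sup>2)"
  obtains \<beta> where "norm \<beta> = 1" and "d \<bullet> \<beta> = c" and "t \<le> \<beta> \<bullet> y"
proof -
  obtain f where f: "norm f = 1" "d \<bullet> f = 0" and y: "y = (d \<bullet> y) *\<^sub>R d + sqrt (1 - (d \<bullet> y)\<^sup>2) *\<^sub>R f"
    using unit_vector_orthogonal_decomposition assms(1-3) by blast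
  define \<beta> where "\<beta> = c *\<^sub>R d + sqrt (1 - c\<^sup>2) *\<^sub>R f"
  have dd: "d \<bullet> d = 1" and ff: "f \<bullet> f = 1"
    using assms(2) f(1) by (simp_all add: dot_square_norm)
  have c2: "c\<^sup>2 \<le> 1"
    using assms(4) by (simp add: abs_square_le_1)
  have "\<beta> \<bullet> \<beta> = 1"
    using dd ff f(2) c2 by (simp add: \<beta>_def inner_add_left inner_add_right inner_commute power2_eq_square)
  moreover have "d \<bullet> \<beta> = c"
    using dd f(2) by (simp add: \<beta>_def inner_add_right)
  moreover have "\<beta> \<bullet> y = c * (d \<bullet> y) + sqrt (1 - c\<^sup>2) * sqrt (1 - (d \<bullet> y)\<^sup>2)"
    using dd ff f(2) by (subst y) (simp add: \<beta>_def inner_add_left inner_add_right inner_commute)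
  moreover have "\<bar>d \<bullet> y\<bar> \<le> 1"
    using Cauchy_Schwarz_ineq2[of d y] assms(2,3) by simp
  ultimately show thesis
    using that arccos_triangle_bound[of c "d \<bullet> y" t] assms by (simp add: norm_eq_sqrt_inner)
qed

lemma sqrt_one_minus_divide_square:
  fixes u s :: real
  assumes "s > 0"
  shows "sqrt (1 - (u / s)\<^sup>2) = sqrt (s\<^sup>2 - u\<^sup>2) / s"
proof -
  have "1 - (u / s)\<^sup>2 = (s\<^sup>2 - u\<^sup>2) / s\<^sup>2"
    using assms by (simp add: field_simps)
  then show ?thesis
    using assms by (simp add: real_sqrt_divide)
qed

lemma exists_unit_vector_inner_bounds_scaled:
  fixes d y :: "'a::euclidean_space" and c t :: real
  assumes "2 \<le> DIM('a)" and "d \<noteq> 0" and "y \<noteq> 0" and "\<bar>c\<bar> \<le> norm d" and "\<bar>t\<bar> \<le> norm y"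
    and "c * norm y < d \<bullet> y"
    and "d \<bullet> y \<le> c * t + sqrt ((norm d)\<^sup>2 - c\<^sup>2) * sqrt ((norm y)\<^sup>2 - t\<^sup>2)"
  obtains \<beta> where "norm \<beta> = 1" and "d \<bullet> \<beta> = c" and "t \<le> \<beta> \<bullet> y"
proof -
  define D Y where "D = norm d" and "Y = norm y"
  have "D > 0" and "Y > 0"
    using assms(2,3) by (simp_all add: D_def Y_def)
  have scaled: "(d /\<^sub>R D) \<bullet> (y /\<^sub>R Y) = (d \<bullet> y) / (D * Y)"
    by (simp add: field_simps)
  also have "\<dots> \<le> (c * t + sqrt (D\<^sup>2 - c\<^sup>2) * sqrt (Y\<^sup>2 - t\<^sup>2)) / (D * Y)"
    using assms(7) \<open>D > 0\<close> \<open>Y > 0\<close> by (simp add: D_def Y_def divide_right_mono)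
  also have "\<dots> = (c / D) * (t / Y) + sqrt (1 - (c / D)\<^sup>2) * sqrt (1 - (t / Y)\<^sup>2)"
    unfolding sqrt_one_minus_divide_square[OF \<open>D > 0\<close>] sqrt_one_minus_divide_square[OF \<open>Y > 0\<close>]
    by (simp only: add_divide_distrib times_divide_times_eq)
  finally have "(d /\<^sub>R D) \<bullet> (y /\<^sub>R Y)
      \<le> (c / D) * (t / Y) + sqrt (1 - (c / D)\<^sup>2) * sqrt (1 - (t / Y)\<^sup>2)" .
  moreover have "c / D < (d /\<^sub>R D) \<bullet> (y /\<^sub>R Y)"
    unfolding scaled using assms(6) \<open>D > 0\<close> \<open>Y > 0\<close> by (simp add: Y_def field_simps)
  moreover have "\<bar>c / D\<bar> \<le> 1" and "\<bar>t / Y\<bar> \<le> 1"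
    using assms(4,5) \<open>D > 0\<close> \<open>Y > 0\<close> by (simp_all add: D_def Y_def divide_le_eq_1)
  moreover have "norm (d /\<^sub>R D) = 1" and "norm (y /\<^sub>R Y) = 1"
    using \<open>D > 0\<close> \<open>Y > 0\<close> by (simp_all add: D_def Y_def)
  ultimately obtain \<beta> where "norm \<beta> = 1" "(d /\<^sub>R D) \<bullet> \<beta> = c / D" "t / Y \<le> \<beta> \<bullet> (y /\<^sub>R Y)"
    using exists_unit_vector_inner_bounds_normalized[OF assms(1)] by blast
  moreover have "(d /\<^sub>R D) \<bullet> \<beta> = (d \<bullet> \<beta>) / D" and "\<beta> \<bullet> (y /\<^sub>R Y) = (\<beta> \<bullet> y) / Y"
    by (simp_all add: field_simps)
  ultimately show thesis
    using that[of \<beta>] \<open>D > 0\<close> \<open>Y > 0\<close> by (simp add: divide_le_cancel)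
qed

lemma exists_unit_vector_inner_bounds:
  fixes d y :: "'a::euclidean_space" and c t :: real
  assumes "2 \<le> DIM('a)" and "\<bar>c\<bar> \<le> norm d" and "\<bar>t\<bar> \<le> norm y"
    and "d \<bullet> y \<le> c * t + sqrt ((norm d)\<^sup>2 - c\<^sup>2) * sqrt ((norm y)\<^sup>2 - t\<^sup>2)"
  obtains \<beta> where "norm \<beta> = 1" and "d \<bullet> \<beta> \<le> c" and "t \<le> \<beta> \<bullet> y"
proof -
  consider "y \<noteq> 0" "d \<bullet> y \<le> c * norm y" | "y = 0" | "y \<noteq> 0" "c * norm y < d \<bullet> y"
    by linarith
  then show thesis
  proof cases
    case 1
    show thesis
    proof (rule that[of "y /\<^sub>R norm y"])
      show "d \<bullet> (y /\<^sub>R norm y) \<le> c"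
        using 1 by (simp add: field_simps)
      show "t \<le> (y /\<^sub>R norm y) \<bullet> y"
      proof -
        have "(y /\<^sub>R norm y) \<bullet> y = norm y"
          using 1 by (simp add: dot_square_norm power2_eq_square)
        then show ?thesis
          using assms(3) by simp
      qed
    qed (use 1 in simp)
  next
    case 2
    obtain u :: 'a where "norm u = 1"
      using vector_choose_size zero_le_one by blast
    show thesis
    proof (cases "d = 0")
      case True
      then show thesis
        using that[of u] \<open>norm u = 1\<close> 2 assms(2,3) by simp
    next
      case False
      show thesis
      proof (rule that[of "- (d /\<^sub>R norm d)"])
        have "d \<bullet> (d /\<^sub>R norm d) = norm d"
          using False by (simp add: dot_square_norm power2_eq_square)
        then show "d \<bullet> - (d /\<^sub>R norm d) \<le> c"
          using assms(2) by simp
      qed (use False 2 assms(3) in simp_all)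
    qed
  next
    case 3
    have "d \<noteq> 0"
      using 3 assms(2) by auto
    obtain \<beta> where "norm \<beta> = 1" "d \<bullet> \<beta> = c" "t \<le> \<beta> \<bullet> y"
      using exists_unit_vector_inner_bounds_scaled[OF assms(1) \<open>d \<noteq> 0\<close> 3(1) assms(2,3) 3(2) assms(4)]
      by blast
    then show thesis
      using that by simp
  qed
qed

lemma S_le0_exists_G_set_ge:
  fixes a lam x :: "real^'n" and d y :: "real^'m"
  assumes "CARD('m) \<ge> 2" and "norm lam = 1" and "norm a \<le> norm d" and "(x, y) \<in> S_le0 a d"
  obtains \<beta> where "\<beta> \<in> G_set a d lam" and "lam \<bullet> x \<le> \<beta> \<bullet> y"
proof -
  define c t where "c = - (a \<bullet> lam)" and "t = lam \<bullet> x"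
  have xy: "norm x \<le> norm y" "a \<bullet> x + d \<bullet> y \<le> 0"
    using assms(4) by (simp_all add: S_le0_def)
  have "\<bar>c\<bar> \<le> norm a" and "\<bar>t\<bar> \<le> norm x"
    using Cauchy_Schwarz_ineq2[of a lam] Cauchy_Schwarz_ineq2[of lam x] assms(2)
    by (simp_all add: c_def t_def)
  then have "c\<^sup>2 \<le> (norm a)\<^sup>2" and "t\<^sup>2 \<le> (norm x)\<^sup>2"
    by (metis abs_le_square_iff abs_norm_cancel)+
  moreover have "(norm a)\<^sup>2 \<le> (norm d)\<^sup>2"
    using assms(3) by (simp add: power_mono)
  ultimately have "c\<^sup>2 \<le> (norm d)\<^sup>2"
    by linarith
  have "d \<bullet> y \<le> c * t + sqrt ((norm a)\<^sup>2 - c\<^sup>2) * sqrt ((norm x)\<^sup>2 - t\<^sup>2)"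
    using inner_ge_components_bound[OF assms(2), of a x] xy(2)
    by (simp add: c_def t_def inner_commute)
  also have "\<dots> \<le> c * t + sqrt ((norm d)\<^sup>2 - c\<^sup>2) * sqrt ((norm y)\<^sup>2 - t\<^sup>2)"
    using assms(3) xy(1) \<open>c\<^sup>2 \<le> (norm d)\<^sup>2\<close> \<open>t\<^sup>2 \<le> (norm x)\<^sup>2\<close>
    by (intro add_left_mono mult_mono real_sqrt_le_mono diff_right_mono power_mono) auto
  finally have bound: "d \<bullet> y \<le> c * t + sqrt ((norm d)\<^sup>2 - c\<^sup>2) * sqrt ((norm y)\<^sup>2 - t\<^sup>2)" .
  have "2 \<le> DIM(real^'m)" and "\<bar>c\<bar> \<le> norm d" and "\<bar>t\<bar> \<le> norm y"
    using assms(1,3) xy(1) \<open>\<bar>c\<bar> \<le> norm a\<close> \<open>\<bar>t\<bar> \<le> norm x\<close> by simp_all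
  then obtain \<beta> where "norm \<beta> = 1" "d \<bullet> \<beta> \<le> c" "t \<le> \<beta> \<bullet> y"
    using exists_unit_vector_inner_bounds bound by blast
  then show thesis
    using that[of \<beta>] by (simp add: G_set_def c_def t_def)
qed

lemma mem_C_G: "(x, y) \<in> C_G lam G \<longleftrightarrow> (\<forall>\<beta>\<in>G. \<beta> \<bullet> y \<le> lam \<bullet> x)"
  by (auto simp: C_G_def)

lemma C_G_eq_Inter_halfspaces: "C_G lam G = (\<Inter>\<beta>\<in>G. {z. (- lam, \<beta>) \<bullet> z \<le> 0})"
  by (auto simp: C_G_def)

lemma convex_C_G: "convex (C_G lam G)"
  unfolding C_G_eq_Inter_halfspaces by (intro convex_INT convex_halfspace_le)

lemma cone_C_G: "cone (C_G lam G)"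
  unfolding C_G_eq_Inter_halfspaces by (auto simp: cone_def inner_scaleR_right mult_nonneg_nonpos)

lemma interior_C_G_if_uniform_margin:
  assumes "norm lam \<le> 1" and "\<forall>\<beta>\<in>G. norm \<beta> \<le> 1" and "\<eta> > 0"
    and "\<forall>\<beta>\<in>G. \<beta> \<bullet> y - lam \<bullet> x \<le> - \<eta>"
  shows "(x, y) \<in> interior (C_G lam G)"
  unfolding mem_interior
proof (intro exI conjI)
  show "\<eta> / 2 > 0"
    using assms(3) by simp
  show "ball (x, y) (\<eta> / 2) \<subseteq> C_G lam G"
  proof
    fix z
    assume near: "z \<in> ball (x, y) (\<eta> / 2)"
    obtain x' y' where z: "z = (x', y')"
      by fastforce
    have "norm (x' - x) < \<eta> / 2" and "norm (y' - y) < \<eta> / 2"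
      using near dist_fst_le[of "(x, y)" z] dist_snd_le[of "(x, y)" z]
      by (simp_all add: z dist_norm norm_minus_commute)
    show "z \<in> C_G lam G"
      unfolding z mem_C_G
    proof
      fix \<beta>
      assume "\<beta> \<in> G"
      have "\<beta> \<bullet> (y' - y) \<le> norm (y' - y)" and "- (lam \<bullet> (x' - x)) \<le> norm (x' - x)"
        using Cauchy_Schwarz_ineq2[of \<beta> "y' - y"] Cauchy_Schwarz_ineq2[of lam "x' - x"]
          assms(1,2) \<open>\<beta> \<in> G\<close> mult_right_le_one_le[of "norm (y' - y)" "norm \<beta>"]
          mult_right_le_one_le[of "norm (x' - x)" "norm lam"]
        by (auto simp: mult.commute)
      moreover have "\<beta> \<bullet> y' - lam \<bullet> x' = (\<beta> \<bullet> y - lam \<bullet> x) + \<beta> \<bullet> (y' - y) - lam \<bullet> (x' - x)"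
        by (simp add: inner_diff_right)
      ultimately show "\<beta> \<bullet> y' \<le> lam \<bullet> x'"
        using assms(4) \<open>\<beta> \<in> G\<close> \<open>norm (x' - x) < \<eta> / 2\<close> \<open>norm (y' - y) < \<eta> / 2\<close> by fastforce
    qed
  qed
qed

lemma not_in_interior_C_G:
  assumes "\<beta> \<in> G" and "\<beta> \<noteq> 0" and "lam \<bullet> x \<le> \<beta> \<bullet> y"
  shows "(x, y) \<notin> interior (C_G lam G)"
proof
  assume "(x, y) \<in> interior (C_G lam G)"
  then obtain \<epsilon> where "\<epsilon> > 0" and ball: "ball (x, y) \<epsilon> \<subseteq> C_G lam G"
    using mem_interior by blast
  define s where "s = \<epsilon> / (2 * norm \<beta>)"
  have "s > 0" and "s * norm \<beta> < \<epsilon>"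
    using \<open>\<epsilon> > 0\<close> assms(2) by (simp_all add: s_def)
  then have "(x, y + s *\<^sub>R \<beta>) \<in> C_G lam G"
    using ball by (auto simp: dist_Pair_Pair dist_norm)
  then have "\<beta> \<bullet> y + s * (\<beta> \<bullet> \<beta>) \<le> lam \<bullet> x"
    using assms(1) by (simp add: mem_C_G inner_add_right)
  moreover have "\<beta> \<bullet> \<beta> > 0"
    using assms(2) by simp
  ultimately show False
    using assms(3) \<open>s > 0\<close> by (smt (verit) mult_pos_pos)
qed

lemma S_free_C_G:
  fixes a lam :: "real^'n" and d :: "real^'m"
  assumes "CARD('m) \<ge> 2" and "norm lam = 1" and "norm a \<le> norm d"
  shows "S_free (S_le0 a d) (C_G lam (G_set a d lam))"
  unfolding S_free_def
proof (intro conjI convex_C_G equals0I)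
  fix z
  assume z: "z \<in> interior (C_G lam (G_set a d lam)) \<inter> S_le0 a d"
  obtain x y where "z = (x, y)"
    by fastforce
  obtain \<beta> where "\<beta> \<in> G_set a d lam" and "lam \<bullet> x \<le> \<beta> \<bullet> y"
    using S_le0_exists_G_set_ge[OF assms] z \<open>z = (x, y)\<close> by blast
  moreover have "\<beta> \<noteq> 0"
    using \<open>\<beta> \<in> G_set a d lam\<close> by (auto simp: G_set_def)
  ultimately show False
    using not_in_interior_C_G z \<open>z = (x, y)\<close> by blast
qed

lemma inner_perturbed_unit_pair_le:
  fixes lam u :: "'a::real_inner" and \<beta> \<beta>\<^sub>0 v :: "'b::real_inner"
  assumes "norm lam = 1" and "norm \<beta> = 1" and "norm \<beta>\<^sub>0 = 1" and "0 \<le> \<theta>"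
    and "\<theta> * (norm v)\<^sup>2 \<le> \<beta>\<^sub>0 \<bullet> v - lam \<bullet> u"
  shows "\<beta> \<bullet> (\<beta>\<^sub>0 - \<theta> *\<^sub>R v) - lam \<bullet> (lam - \<theta> *\<^sub>R u) \<le> - (\<theta> * (\<beta>\<^sub>0 \<bullet> v - lam \<bullet> u) / 2)"
proof -
  define \<delta> e where "\<delta> = \<beta>\<^sub>0 \<bullet> v - lam \<bullet> u" and "e = \<beta> - \<beta>\<^sub>0"
  have unit: "\<beta> \<bullet> \<beta> = 1" "\<beta>\<^sub>0 \<bullet> \<beta>\<^sub>0 = 1" "lam \<bullet> lam = 1"
    using assms(1-3) by (simp_all add: dot_square_norm)
  have "(norm e)\<^sup>2 = 2 - 2 * (\<beta> \<bullet> \<beta>\<^sub>0)"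
    unfolding power2_norm_eq_inner e_def
    by (simp add: inner_diff_left inner_diff_right inner_commute[of \<beta>\<^sub>0 \<beta>] unit)
  moreover have "\<beta> \<bullet> (\<beta>\<^sub>0 - \<theta> *\<^sub>R v) - lam \<bullet> (lam - \<theta> *\<^sub>R u) = \<beta> \<bullet> \<beta>\<^sub>0 - 1 - \<theta> * (\<beta> \<bullet> v) + \<theta> * (lam \<bullet> u)"
    by (simp add: inner_diff_right unit)
  moreover have "\<theta> * (e \<bullet> v) = \<theta> * (\<beta> \<bullet> v) - \<theta> * (\<beta>\<^sub>0 \<bullet> v)"
    by (simp add: e_def inner_diff_left right_diff_distrib)
  moreover have "- (\<theta> * (e \<bullet> v)) \<le> (norm e)\<^sup>2 / 2 + (\<theta> * norm v)\<^sup>2 / 2"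
  proof -
    have "- (e \<bullet> v) \<le> norm e * norm v"
      using Cauchy_Schwarz_ineq2[of e v] by linarith
    from mult_left_mono[OF this assms(4)]
    have "- (\<theta> * (e \<bullet> v)) \<le> norm e * (\<theta> * norm v)"
      by (simp add: ac_simps)
    also have "\<dots> \<le> (norm e)\<^sup>2 / 2 + (\<theta> * norm v)\<^sup>2 / 2"
      using sum_squares_ge_zero[of "norm e - \<theta> * norm v" 0] by (simp add: power2_eq_square algebra_simps)
    finally show ?thesis .
  qed
  moreover have "(\<theta> * norm v)\<^sup>2 \<le> \<theta> * \<delta>"
    using mult_left_mono[OF assms(5) assms(4)] by (simp add: \<delta>_def power2_eq_square ac_simps)
  moreover have "\<theta> * \<delta> = \<theta> * (\<beta>\<^sub>0 \<bullet> v) - \<theta> * (lam \<bullet> u)"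
    by (simp add: \<delta>_def right_diff_distrib)
  ultimately show ?thesis
    unfolding \<delta>_def[symmetric] by linarith
qed

lemma interior_convex_superset_of_cone:
  fixes C C' :: "'a::euclidean_space set"
  assumes "cone C" and "C \<subseteq> C'" and "convex C'" and "z \<in> C'"
    and "0 < \<theta>" and "\<theta> < 1" and "p - \<theta> *\<^sub>R z \<in> interior C"
  shows "p \<in> interior C'"
proof -
  define q where "q = (1 / (1 - \<theta>)) *\<^sub>R (p - \<theta> *\<^sub>R z)"
  have "(*\<^sub>R) (1 / (1 - \<theta>)) ` interior C \<subseteq> C'"
  proof (rule image_subsetI)
    fix c
    assume "c \<in> interior C"
    then have "(1 / (1 - \<theta>)) *\<^sub>R c \<in> C"
      using assms(1,6) interior_subset mem_cone by fastforce
    then show "(1 / (1 - \<theta>)) *\<^sub>R c \<in> C'"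
      using assms(2) by blast
  qed
  moreover have "open ((*\<^sub>R) (1 / (1 - \<theta>)) ` interior C)"
    using assms(6) by (intro open_scaling) auto
  moreover have "q \<in> (*\<^sub>R) (1 / (1 - \<theta>)) ` interior C"
    unfolding q_def using assms(7) by (rule imageI)
  ultimately have "q \<in> interior C'"
    using interior_maximal by blast
  then have "z - (1 - \<theta>) *\<^sub>R (z - q) \<in> interior C'"
    using assms(3-6) by (intro mem_interior_convex_shrink) auto
  moreover have "(1 - \<theta>) *\<^sub>R q = p - \<theta> *\<^sub>R z"
    using assms(6) by (simp add: q_def)
  then have "z - (1 - \<theta>) *\<^sub>R (z - q) = p"
    by (simp only: scaleR_diff_right) (simp add: algebra_simps)
  ultimately show ?thesis
    by simp
qed

lemma convex_superset_C_G_interior: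
  fixes lam :: "real^'n" and G :: "(real^'m) set"
  assumes "norm lam = 1" and "\<forall>\<beta>\<in>G. norm \<beta> = 1"
    and "convex C'" and "C_G lam G \<subseteq> C'" and "C' \<noteq> C_G lam G"
  obtains \<beta>\<^sub>0 where "\<beta>\<^sub>0 \<in> G" and "(lam, \<beta>\<^sub>0) \<in> interior C'"
proof -
  obtain u v where "(u, v) \<in> C'" and "(u, v) \<notin> C_G lam G"
    using assms(4,5) by auto
  then obtain \<beta>\<^sub>0 where "\<beta>\<^sub>0 \<in> G" and "lam \<bullet> u < \<beta>\<^sub>0 \<bullet> v"
    by (auto simp: mem_C_G not_le)
  define \<delta> where "\<delta> = \<beta>\<^sub>0 \<bullet> v - lam \<bullet> u"
  define \<theta> where "\<theta> = min (1 / 2) (\<delta> / ((norm v)\<^sup>2 + 1))"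
  have "\<delta> > 0"
    using \<open>lam \<bullet> u < \<beta>\<^sub>0 \<bullet> v\<close> by (simp add: \<delta>_def)
  then have "0 < \<theta>" and "\<theta> < 1"
    by (simp_all add: \<theta>_def add_nonneg_pos)
  have "\<theta> \<le> \<delta> / ((norm v)\<^sup>2 + 1)"
    by (simp add: \<theta>_def)
  then have "\<theta> * ((norm v)\<^sup>2 + 1) \<le> \<delta>"
    by (simp add: pos_le_divide_eq add_nonneg_pos)
  then have small: "\<theta> * (norm v)\<^sup>2 \<le> \<delta>"
    using \<open>0 < \<theta>\<close> by (simp add: algebra_simps)
  have "\<forall>\<beta>\<in>G. \<beta> \<bullet> (\<beta>\<^sub>0 - \<theta> *\<^sub>R v) - lam \<bullet> (lam - \<theta> *\<^sub>R u) \<le> - (\<theta> * \<delta> / 2)"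
    using inner_perturbed_unit_pair_le[OF assms(1) _ _ _ small[unfolded \<delta>_def]]
      assms(2) \<open>\<beta>\<^sub>0 \<in> G\<close> \<open>0 < \<theta>\<close> by (simp add: \<delta>_def)
  then have "(lam - \<theta> *\<^sub>R u, \<beta>\<^sub>0 - \<theta> *\<^sub>R v) \<in> interior (C_G lam G)"
    using assms(1,2) \<open>0 < \<theta>\<close> \<open>\<delta> > 0\<close> by (intro interior_C_G_if_uniform_margin) auto
  then have "(lam, \<beta>\<^sub>0) - \<theta> *\<^sub>R (u, v) \<in> interior (C_G lam G)"
    by simp
  then have "(lam, \<beta>\<^sub>0) \<in> interior C'"
    using interior_convex_superset_of_cone[OF cone_C_G assms(4,3) \<open>(u, v) \<in> C'\<close> \<open>0 < \<theta>\<close> \<open>\<theta> < 1\<close>]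
    by blast
  then show thesis
    using that \<open>\<beta>\<^sub>0 \<in> G\<close> by blast
qed

lemma maximal_S_free_C_G:
  fixes a lam :: "real^'n" and d :: "real^'m"
  assumes "CARD('m) \<ge> 2" and "norm lam = 1" and "norm a \<le> norm d"
  shows "maximal_S_free (S_le0 a d) (C_G lam (G_set a d lam))"
  unfolding maximal_S_free_def
proof (intro conjI allI impI S_free_C_G[OF assms])
  fix C'
  assume "S_free (S_le0 a d) C' \<and> C_G lam (G_set a d lam) \<subseteq> C'"
  then have "convex C'" and "interior C' \<inter> S_le0 a d = {}" and "C_G lam (G_set a d lam) \<subseteq> C'"
    by (auto simp: S_free_def)
  show "C' = C_G lam (G_set a d lam)"
  proof (rule ccontr)
    assume "C' \<noteq> C_G lam (G_set a d lam)"
    then obtain \<beta>\<^sub>0 where "\<beta>\<^sub>0 \<in> G_set a d lam" and "(lam, \<beta>\<^sub>0) \<in> interior C'"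
      using convex_superset_C_G_interior[OF assms(2) _ \<open>convex C'\<close> \<open>C_G lam (G_set a d lam) \<subseteq> C'\<close>]
      by (auto simp: G_set_def)
    moreover have "(lam, \<beta>\<^sub>0) \<in> S_le0 a d"
      using \<open>\<beta>\<^sub>0 \<in> G_set a d lam\<close> assms(2) by (simp add: G_set_def S_le0_def)
    ultimately show False
      using \<open>interior C' \<inter> S_le0 a d = {}\<close> by blast
  qed
qed

theorem proposition3:
  fixes a :: "real^'n" and d :: "real^'m" and xb :: "real^'n" and yb :: "real^'m"
  assumes "CARD('m) \<ge> 2"
    and "norm d \<ge> norm a"
    and "(xb, yb) \<notin> S_le0 a d"
    and "a \<bullet> xb + d \<bullet> yb \<le> 0"
  shows "maximal_S_free (S_le0 a d) (C_G (xb /\<^sub>R norm xb) (G_set a d (xb /\<^sub>R norm xb)))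
       \<and> (xb, yb) \<in> interior (C_G (xb /\<^sub>R norm xb) (G_set a d (xb /\<^sub>R norm xb)))"
proof
  define lam where "lam = xb /\<^sub>R norm xb"
  have "norm yb < norm xb"
    using assms(3,4) by (auto simp: S_le0_def)
  then have "xb \<noteq> 0"
    by auto
  then have "norm lam = 1" and "lam \<bullet> xb = norm xb"
    by (simp_all add: lam_def dot_square_norm power2_eq_square)
  show "maximal_S_free (S_le0 a d) (C_G (xb /\<^sub>R norm xb) (G_set a d (xb /\<^sub>R norm xb)))"
    using maximal_S_free_C_G[OF assms(1) \<open>norm lam = 1\<close> assms(2)] by (simp add: lam_def)
  have "\<beta> \<bullet> yb - lam \<bullet> xb \<le> - (norm xb - norm yb)" if "\<beta> \<in> G_set a d lam" for \<beta>
    using Cauchy_Schwarz_ineq2[of \<beta> yb] that \<open>lam \<bullet> xb = norm xb\<close> by (simp add: G_set_def)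
  then have "(xb, yb) \<in> interior (C_G lam (G_set a d lam))"
    using \<open>norm yb < norm xb\<close> \<open>norm lam = 1\<close>
    by (intro interior_C_G_if_uniform_margin[where \<eta> = "norm xb - norm yb"]) (auto simp: G_set_def)
  then show "(xb, yb) \<in> interior (C_G (xb /\<^sub>R norm xb) (G_set a d (xb /\<^sub>R norm xb)))"
    by (simp add: lam_def)
qed

end
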